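(* Let $I\subset S=K[x_1,\dots,x_t]$ be an $\mathfrak m$-primary monomial ideal with $x_i^{a_i}\in\mathscr G(I)$, $a_i\in\mathbb Z_{>0}$, for $i=1,\dots,t$. Then $I=\langle x_1^{a_1},\dots,x_t^{a_t}\rangle$ if and only if $v(I)=\sum_{i=1}^t a_i-t$.
   Context: $K$ is a field, $S$ is standard graded and $\mathfrak m=\langle x_1,\dots,x_t\rangle$. For a proper graded ideal $I$, the $v$-number is $v(I)=\min\{k\ge 0 : \exists f\in S_k,\ \mathcal P\in\operatorname{Ass}(S/I) \text{ with } (I:f)=\mathcal P\}$. $\mathscr G(I)$ is the minimal monomial generating set of the monomial ideal $I$. *)

theory Defs
  imports Main "HOL-Library.Poly_Mapping"
begin

text \<open>The ring
S = K[x_1,...,x_t] is modelled by the polynomials whose monomials only involve the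
variables with index < t (variable x_{i+1} of the paper is index i).\<close>

type_synonym monom = "nat \<Rightarrow>\<^sub>0 nat"
type_synonym 'k mpoly = "monom \<Rightarrow>\<^sub>0 'k"

definition polyring :: "nat \<Rightarrow> 'k::field mpoly set" where
  "polyring t = {p. \<forall>m \<in> Poly_Mapping.keys p. Poly_Mapping.keys m \<subseteq> {..<t}}"

definition tdeg :: "monom \<Rightarrow> nat" where
  "tdeg m = (\<Sum>i\<in>Poly_Mapping.keys m. Poly_Mapping.lookup m i)"

definition homog :: "nat \<Rightarrow> nat \<Rightarrow> 'k::field mpoly set" where
  "homog t k = {p \<in> polyring t. \<forall>m \<in> Poly_Mapping.keys p. tdeg m = k}"

definition monomial :: "monom \<Rightarrow> 'k::field mpoly" where
  "monomial m = Poly_Mapping.single m 1"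

definition varpow :: "nat \<Rightarrow> nat \<Rightarrow> 'k::field mpoly" where
  "varpow i a = monomial (Poly_Mapping.single i a)"

definition is_ideal :: "nat \<Rightarrow> 'k::field mpoly set \<Rightarrow> bool" where
  "is_ideal t I \<longleftrightarrow> I \<subseteq> polyring t \<and> 0 \<in> I \<and>
     (\<forall>f\<in>I. \<forall>g\<in>I. f + g \<in> I) \<and> (\<forall>f\<in>I. \<forall>g\<in>polyring t. g * f \<in> I)"

definition ideal_gen :: "nat \<Rightarrow> 'k::field mpoly set \<Rightarrow> 'k mpoly set" where
  "ideal_gen t G = \<Inter> {I. is_ideal t I \<and> G \<subseteq> I}"

definition proper_ideal :: "nat \<Rightarrow> 'k::field mpoly set \<Rightarrow> bool" where
  "proper_ideal t I \<longleftrightarrow> is_ideal t I \<and> I \<noteq> polyring t"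

definition graded_ideal :: "nat \<Rightarrow> 'k::field mpoly set \<Rightarrow> bool" where
  "graded_ideal t I \<longleftrightarrow> (\<exists>G. (\<forall>g\<in>G. \<exists>k. g \<in> homog t k) \<and> I = ideal_gen t G)"

definition prime_ideal :: "nat \<Rightarrow> 'k::field mpoly set \<Rightarrow> bool" where
  "prime_ideal t P \<longleftrightarrow> proper_ideal t P \<and>
     (\<forall>a\<in>polyring t. \<forall>b\<in>polyring t. a * b \<in> P \<longrightarrow> a \<in> P \<or> b \<in> P)"

definition radical :: "nat \<Rightarrow> 'k::field mpoly set \<Rightarrow> 'k mpoly set" where
  "radical t I = {f \<in> polyring t. \<exists>n. f ^ n \<in> I}"

definition primary_ideal :: "nat \<Rightarrow> 'k::field mpoly set \<Rightarrow> bool" where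
  "primary_ideal t Q \<longleftrightarrow> proper_ideal t Q \<and>
     (\<forall>a\<in>polyring t. \<forall>b\<in>polyring t. a * b \<in> Q \<longrightarrow> a \<in> Q \<or> b \<in> radical t Q)"

definition maxid :: "nat \<Rightarrow> 'k::field mpoly set" where
  "maxid t = ideal_gen t {varpow i 1 | i. i < t}"

definition m_primary :: "nat \<Rightarrow> 'k::field mpoly set \<Rightarrow> bool" where
  "m_primary t I \<longleftrightarrow> primary_ideal t I \<and> radical t I = maxid t"

definition colon :: "nat \<Rightarrow> 'k::field mpoly set \<Rightarrow> 'k mpoly \<Rightarrow> 'k mpoly set" where
  "colon t I f = {g \<in> polyring t. g * f \<in> I}"

definition Ass :: "nat \<Rightarrow> 'k::field mpoly set \<Rightarrow> 'k mpoly set set" where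
  "Ass t I = {P. prime_ideal t P \<and> (\<exists>f\<in>polyring t. colon t I f = P)}"

definition v_number :: "nat \<Rightarrow> 'k::field mpoly set \<Rightarrow> nat" where
  "v_number t I = (LEAST k. \<exists>f \<in> homog t k. \<exists>P \<in> Ass t I. colon t I f = P)"

definition is_monom :: "nat \<Rightarrow> 'k::field mpoly \<Rightarrow> bool" where
  "is_monom t u \<longleftrightarrow> (\<exists>m. Poly_Mapping.keys m \<subseteq> {..<t} \<and> u = monomial m)"

definition monomial_ideal :: "nat \<Rightarrow> 'k::field mpoly set \<Rightarrow> bool" where
  "monomial_ideal t I \<longleftrightarrow> (\<exists>G. (\<forall>g\<in>G. is_monom t g) \<and> I = ideal_gen t G)"

definition mingens :: "nat \<Rightarrow> 'k::field mpoly set \<Rightarrow> 'k mpoly set" where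
  "mingens t I = {u \<in> I. is_monom t u \<and>
      (\<forall>w\<in>I. is_monom t w \<longrightarrow> w dvd u \<longrightarrow> w = u)}"

end

theory Submission
  imports Defs
begin

(* Call a monomial w a socle monomial of the monomial ideal I if w is not in I but x_i w is in I
   for every i.  Then (I : w) is the maximal ideal m, so v(I) <= deg w.

   For the pure power ideal J = (x_1^a_1, ..., x_t^a_t) the standard monomials (those outside J)
   are the divisors of the corner x_1^(a_1-1) ... x_t^(a_t-1), a socle monomial of degree
   sum a_i - t.  Conversely, if (J : f) = P is prime and f is homogeneous of smaller degree, then
   some standard monomial c of f has c_i + 1 < a_i for some i; then x_i is not in P although
   x_i^a_i is.  Hence v(J) = sum a_i - t.

   If I strictly contains J, then I contains a standard monomial of J and hence the corner, so
   every standard monomial of I has degree below sum a_i - t.  One of maximal degree is a socle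
   monomial, which gives v(I) < sum a_i - t. *)

lemma monom_add_eq_0_iff: "(m + n :: monom) = 0 \<longleftrightarrow> m = 0 \<and> n = 0"
proof
  assume "m + n = 0"
  then have "Poly_Mapping.lookup m i = 0 \<and> Poly_Mapping.lookup n i = 0" for i
    by (metis add_is_0 lookup_add lookup_zero)
  then show "m = 0 \<and> n = 0" by (auto intro: poly_mapping_eqI)
qed simp

lemma keys_add_monom: "Poly_Mapping.keys (m + n :: monom) = Poly_Mapping.keys m \<union> Poly_Mapping.keys n"
  by (auto simp: in_keys_iff lookup_add)

lemma monom_ne_0_iff:
  assumes "Poly_Mapping.keys (m :: monom) \<subseteq> {..<t}"
  shows "m \<noteq> 0 \<longleftrightarrow> (\<exists>i<t. 0 < Poly_Mapping.lookup m i)"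
proof
  assume "m \<noteq> 0"
  then obtain i where i: "Poly_Mapping.lookup m i \<noteq> 0" by (metis poly_mapping_eqI lookup_zero)
  then have "i \<in> Poly_Mapping.keys m" by (simp add: in_keys_iff)
  with assms i show "\<exists>i<t. 0 < Poly_Mapping.lookup m i" by auto
qed auto

lemma lookup_mult_zero:
  "Poly_Mapping.lookup (f * g :: monom \<Rightarrow>\<^sub>0 'b::semiring_0) 0 = Poly_Mapping.lookup f 0 * Poly_Mapping.lookup g 0"
  by (simp add: lookup_mult monom_add_eq_0_iff when_when[symmetric] mult_when)

lemma lookup_mult_single_add:
  "Poly_Mapping.lookup (g * Poly_Mapping.single w c :: 'a::cancel_comm_monoid_add \<Rightarrow>\<^sub>0 'b::semiring_0) (m + w) = Poly_Mapping.lookup g m * c"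
proof -
  have "(\<Sum>n. (c when w = n) when m + w = l + n) = (c when l = m)" for l
  proof -
    have "(\<Sum>n. (c when w = n) when m + w = l + n) = (\<Sum>n. (c when m + w = l + w) when w = n)"
      by (rule Sum_any.cong) (auto simp: when_def)
    then show ?thesis by (auto simp: when_def)
  qed
  then show ?thesis by (simp add: lookup_mult lookup_single mult_when)
qed

lemma keys_monomial [simp]: "Poly_Mapping.keys (monomial m :: 'k::field mpoly) = {m}"
  by (simp add: monomial_def)

lemma monomial_eq_iff [simp]: "(monomial m :: 'k::field mpoly) = monomial n \<longleftrightarrow> m = n"
  by (metis keys_monomial singleton_inject)

lemma monomial_zero [simp]: "monomial 0 = 1"
  by (simp add: monomial_def)

lemma keys_mult_monomial:
  "Poly_Mapping.keys (g * monomial w :: 'k::field mpoly) = (\<lambda>m. m + w) ` Poly_Mapping.keys g"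
proof
  show "Poly_Mapping.keys (g * monomial w) \<subseteq> (\<lambda>m. m + w) ` Poly_Mapping.keys g"
    using keys_mult[of g "monomial w"] by auto
  show "(\<lambda>m. m + w) ` Poly_Mapping.keys g \<subseteq> Poly_Mapping.keys (g * monomial w)"
    by (auto simp: monomial_def in_keys_iff lookup_mult_single_add)
qed

lemma poly_mapping_sum_single:
  "p = (\<Sum>m\<in>Poly_Mapping.keys p. Poly_Mapping.single m (Poly_Mapping.lookup p m))"
  by (rule poly_mapping_eqI)
     (auto simp: lookup_sum lookup_single when_def in_keys_iff sum.delta'[unfolded when_def])

lemma varpow_Suc: "(varpow i (Suc n) :: 'k::field mpoly) = varpow i 1 * varpow i n"
  by (simp add: varpow_def monomial_def mult_single flip: single_add)

lemma tdeg_add: "tdeg (m + n) = tdeg m + tdeg n"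
  unfolding tdeg_def by (rule setsum_keys_plus_distrib) simp_all

lemma tdeg_single [simp]: "tdeg (Poly_Mapping.single i k) = k"
  by (simp add: tdeg_def)

lemma tdeg_eq_sum_lessThan:
  assumes "Poly_Mapping.keys m \<subseteq> {..<t}"
  shows "tdeg m = (\<Sum>i<t. Poly_Mapping.lookup m i)"
  unfolding tdeg_def using assms by (intro sum.mono_neutral_left) (auto simp: in_keys_iff)

lemma single_in_polyring: "Poly_Mapping.keys m \<subseteq> {..<t} \<Longrightarrow> Poly_Mapping.single m c \<in> polyring t"
  by (simp add: polyring_def)

lemma monomial_in_polyring: "Poly_Mapping.keys m \<subseteq> {..<t} \<Longrightarrow> monomial m \<in> polyring t"
  by (simp add: monomial_def single_in_polyring)

lemma monomial_in_homog: "Poly_Mapping.keys m \<subseteq> {..<t} \<Longrightarrow> monomial m \<in> homog t (tdeg m)"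
  by (simp add: homog_def monomial_in_polyring)

lemma polyring_add: "p \<in> polyring t \<Longrightarrow> q \<in> polyring t \<Longrightarrow> p + q \<in> polyring t"
  using keys_add[of p q] by (auto simp: polyring_def)

lemma polyring_mult: "p \<in> polyring t \<Longrightarrow> q \<in> polyring t \<Longrightarrow> p * q \<in> polyring t"
  using keys_mult[of p q] by (force simp: polyring_def keys_add_monom)

lemma varpow_in_polyring: "i < t \<Longrightarrow> varpow i k \<in> polyring t"
  by (simp add: varpow_def monomial_in_polyring)

lemma is_monom_varpow: "i < t \<Longrightarrow> is_monom t (varpow i k)"
  by (auto simp: is_monom_def varpow_def)

lemma ideal_sum:
  assumes "is_ideal t I"
  shows "finite A \<Longrightarrow> \<forall>x\<in>A. f x \<in> I \<Longrightarrow> sum f A \<in> I"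
  by (induction A rule: finite_induct) (use assms in \<open>auto simp: is_ideal_def\<close>)

lemma ideal_eq_polyring_if_one: "is_ideal t I \<Longrightarrow> 1 \<in> I \<Longrightarrow> I = polyring t"
  unfolding is_ideal_def by (metis mult.right_neutral subsetI subset_antisym)

lemma colon_eq_polyring_if_mem: "is_ideal t I \<Longrightarrow> f \<in> I \<Longrightarrow> colon t I f = polyring t"
  by (auto simp: colon_def is_ideal_def)

lemma ideal_gen_least: "is_ideal t I \<Longrightarrow> G \<subseteq> I \<Longrightarrow> ideal_gen t G \<subseteq> I"
  by (auto simp: ideal_gen_def)

lemma prime_ideal_varpow_imp_var:
  assumes P: "prime_ideal t P" and i: "i < t" and "varpow i n \<in> P"
  shows "varpow i 1 \<in> P"
  using assms(3)
proof (induction n)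
  case 0
  then have "1 \<in> P" by (simp add: varpow_def)
  then show ?case using P ideal_eq_polyring_if_one unfolding prime_ideal_def proper_ideal_def by blast
next
  case (Suc n)
  then show ?case using P Suc varpow_in_polyring[OF i] unfolding varpow_Suc prime_ideal_def by metis
qed

subsection \<open>Monomial ideals\<close>

definition monom_multiples :: "'k::field mpoly set \<Rightarrow> monom set" where
  "monom_multiples G = {m + d | m d. monomial m \<in> G}"

definition standard_monoms :: "nat \<Rightarrow> 'k::field mpoly set \<Rightarrow> monom set" where
  "standard_monoms t G = {m. Poly_Mapping.keys m \<subseteq> {..<t} \<and> m \<notin> monom_multiples G}"

definition socle_monoms :: "nat \<Rightarrow> 'k::field mpoly set \<Rightarrow> monom set" where
  "socle_monoms t G =
     {w \<in> standard_monoms t G. \<forall>i<t. w + Poly_Mapping.single i 1 \<in> monom_multiples G}"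

lemma monomial_in_monom_multiples: "monomial m \<in> G \<Longrightarrow> m \<in> monom_multiples G"
  unfolding monom_multiples_def by (intro CollectI exI[of _ m] exI[of _ 0]) simp

lemma monom_multiples_add: "m \<in> monom_multiples G \<Longrightarrow> m + d \<in> monom_multiples G"
  unfolding monom_multiples_def using add.assoc by blast

lemma monom_multiples_mono:
  assumes "m \<in> monom_multiples G" and "\<forall>i. Poly_Mapping.lookup m i \<le> Poly_Mapping.lookup n i"
  shows "n \<in> monom_multiples G"
proof -
  have "n = m + (n - m)"
    using assms(2) by (intro poly_mapping_eqI) (simp add: lookup_add lookup_minus)
  then show ?thesis using monom_multiples_add[OF assms(1)] by metis
qed

lemma standard_monom_lookup_less:
  assumes "Poly_Mapping.single i k \<in> monom_multiples G" and "m \<in> standard_monoms t G"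
  shows "Poly_Mapping.lookup m i < k"
proof (rule ccontr)
  assume "\<not> ?thesis"
  then have "m \<in> monom_multiples G"
    by (intro monom_multiples_mono[OF assms(1)]) (simp add: lookup_single when_def)
  with assms(2) show False by (simp add: standard_monoms_def)
qed

lemma is_ideal_monom_multiples:
  "is_ideal t {p \<in> polyring t. Poly_Mapping.keys p \<subseteq> monom_multiples G}" (is "is_ideal t ?S")
proof -
  have add: "f + g \<in> ?S" if "f \<in> ?S" "g \<in> ?S" for f g
    using that polyring_add[of f t g] keys_add[of f g] by blast
  have mult: "g * f \<in> ?S" if f: "f \<in> ?S" and g: "g \<in> polyring t" for f g
  proof -
    have "Poly_Mapping.keys (g * f) \<subseteq> monom_multiples G"
    proof
      fix m assume "m \<in> Poly_Mapping.keys (g * f)"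
      then obtain b c where "m = c + b" "c \<in> Poly_Mapping.keys f"
        using keys_mult[of g f] by (auto simp: add.commute)
      then show "m \<in> monom_multiples G" using f monom_multiples_add by blast
    qed
    then show ?thesis using f g polyring_mult by blast
  qed
  have "?S \<subseteq> polyring t" "0 \<in> ?S" by (auto simp: polyring_def)
  then show ?thesis unfolding is_ideal_def using add mult by (intro conjI ballI) simp_all
qed

lemma ideal_gen_monomials:
  fixes G :: "'k::field mpoly set"
  assumes G: "\<forall>g\<in>G. is_monom t g"
  shows "ideal_gen t G = {p \<in> polyring t. Poly_Mapping.keys p \<subseteq> monom_multiples G}"
    (is "_ = ?S")
proof
  have "G \<subseteq> ?S"
  proof
    fix g assume "g \<in> G"
    with G obtain m where "Poly_Mapping.keys m \<subseteq> {..<t}" "g = monomial m"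
      by (auto simp: is_monom_def)
    with \<open>g \<in> G\<close> show "g \<in> ?S"
      by (simp add: monomial_in_polyring monomial_in_monom_multiples)
  qed
  then show "ideal_gen t G \<subseteq> ?S"
    by (rule ideal_gen_least[OF is_ideal_monom_multiples])
next
  show "?S \<subseteq> ideal_gen t G"
  proof (clarsimp simp: ideal_gen_def)
    fix p :: "'k mpoly" and J assume p: "p \<in> polyring t" "Poly_Mapping.keys p \<subseteq> monom_multiples G"
      and J: "is_ideal t J" "G \<subseteq> J"
    have "Poly_Mapping.single m (Poly_Mapping.lookup p m) \<in> J" if m: "m \<in> Poly_Mapping.keys p" for m
    proof -
      obtain m' d where md: "monomial m' \<in> G" "m = m' + d"
        using p(2) m by (auto simp: monom_multiples_def)
      have "Poly_Mapping.keys (m' + d) \<subseteq> {..<t}"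
        using p(1) m by (simp add: polyring_def md(2)[symmetric])
      then have "Poly_Mapping.single d (Poly_Mapping.lookup p m) \<in> polyring t"
        by (simp add: keys_add_monom single_in_polyring)
      then have "Poly_Mapping.single d (Poly_Mapping.lookup p m) * monomial m' \<in> J"
        using J md(1) unfolding is_ideal_def by blast
      then show ?thesis by (simp add: monomial_def mult_single md(2) add.commute)
    qed
    then have "(\<Sum>m\<in>Poly_Mapping.keys p. Poly_Mapping.single m (Poly_Mapping.lookup p m)) \<in> J"
      by (intro ideal_sum[OF J(1)]) auto
    then show "p \<in> J" by (simp flip: poly_mapping_sum_single)
  qed
qed

lemma is_ideal_ideal_gen_monomials: "\<forall>g\<in>G. is_monom t g \<Longrightarrow> is_ideal t (ideal_gen t G)"
  by (simp add: ideal_gen_monomials is_ideal_monom_multiples)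

lemma zero_in_standard_monoms:
  fixes G :: "'k::field mpoly set"
  assumes "\<forall>g\<in>G. is_monom t g" and "ideal_gen t G \<noteq> polyring t"
  shows "0 \<in> standard_monoms t G"
proof -
  have "(1 :: 'k mpoly) \<in> polyring t" by (simp add: polyring_def)
  then have "0 \<in> monom_multiples G \<Longrightarrow> (1 :: 'k mpoly) \<in> ideal_gen t G"
    by (simp add: ideal_gen_monomials[OF assms(1)])
  then show ?thesis
    using assms ideal_eq_polyring_if_one is_ideal_ideal_gen_monomials by (fastforce simp: standard_monoms_def)
qed

subsection \<open>Pure powers and the maximal ideal\<close>

abbreviation pure_powers :: "nat \<Rightarrow> (nat \<Rightarrow> nat) \<Rightarrow> 'k::field mpoly set" where
  "pure_powers t a \<equiv> {varpow i (a i) | i. i < t}"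

lemma is_monom_pure_powers: "\<forall>g\<in>pure_powers t a. is_monom t g"
  using is_monom_varpow by blast

lemma monom_multiples_pure_powers:
  "monom_multiples (pure_powers t a :: 'k::field mpoly set) = {m. \<exists>i<t. a i \<le> Poly_Mapping.lookup m i}"
proof (intro set_eqI iffI)
  fix m assume "m \<in> monom_multiples (pure_powers t a :: 'k mpoly set)"
  then show "m \<in> {m. \<exists>i<t. a i \<le> Poly_Mapping.lookup m i}"
    by (force simp: monom_multiples_def varpow_def lookup_add)
next
  fix m assume "m \<in> {m. \<exists>i<t. a i \<le> Poly_Mapping.lookup m i}"
  then obtain i where "i < t" "a i \<le> Poly_Mapping.lookup m i" by blast
  moreover have "Poly_Mapping.single i (a i) \<in> monom_multiples (pure_powers t a :: 'k mpoly set)"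
    using \<open>i < t\<close> by (auto simp: varpow_def intro: monomial_in_monom_multiples)
  ultimately show "m \<in> monom_multiples (pure_powers t a :: 'k mpoly set)"
    by (auto simp: lookup_single when_def intro: monom_multiples_mono)
qed

lemma maxid_eq: "maxid t = {p \<in> (polyring t :: 'k::field mpoly set). Poly_Mapping.lookup p 0 = 0}"
proof -
  have "maxid t = ideal_gen t (pure_powers t (\<lambda>_. 1) :: 'k mpoly set)"
    by (simp add: maxid_def)
  also have "\<dots> = {p \<in> polyring t. \<forall>m\<in>Poly_Mapping.keys p. \<exists>i<t. 0 < Poly_Mapping.lookup m i}"
    by (auto simp: ideal_gen_monomials[OF is_monom_pure_powers] monom_multiples_pure_powers
        Suc_le_eq)
  also have "\<dots> = {p \<in> polyring t. Poly_Mapping.lookup p 0 = 0}"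
  proof (intro Collect_cong conj_cong refl)
    fix p :: "'k mpoly" assume "p \<in> polyring t"
    then have "(\<forall>m\<in>Poly_Mapping.keys p. \<exists>i<t. 0 < Poly_Mapping.lookup m i) \<longleftrightarrow>
        (\<forall>m\<in>Poly_Mapping.keys p. m \<noteq> 0)"
      using monom_ne_0_iff by (intro ball_cong refl) (auto simp: polyring_def)
    also have "\<dots> \<longleftrightarrow> Poly_Mapping.lookup p 0 = 0" by (auto simp: in_keys_iff)
    finally show "(\<forall>m\<in>Poly_Mapping.keys p. \<exists>i<t. 0 < Poly_Mapping.lookup m i) \<longleftrightarrow>
        Poly_Mapping.lookup p 0 = 0" .
  qed
  finally show ?thesis .
qed

lemma prime_ideal_maxid: "prime_ideal t (maxid t :: 'k::field mpoly set)"
  unfolding prime_ideal_def proper_ideal_def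
proof (intro conjI ballI impI)
  show "is_ideal t (maxid t :: 'k mpoly set)"
    unfolding maxid_def by (rule is_ideal_ideal_gen_monomials) (use is_monom_varpow in blast)
  have "(1 :: 'k mpoly) \<in> polyring t" "(1 :: 'k mpoly) \<notin> maxid t"
    by (simp_all add: polyring_def maxid_eq)
  then show "maxid t \<noteq> (polyring t :: 'k mpoly set)" by blast
qed (auto simp: maxid_eq lookup_mult_zero)

subsection \<open>Socle monomials\<close>

lemma colon_socle_monom_eq_maxid:
  assumes G: "\<forall>g\<in>G. is_monom t g" and w: "w \<in> socle_monoms t G"
  shows "colon t (ideal_gen t G) (monomial w) = maxid t"
proof -
  have wt: "Poly_Mapping.keys w \<subseteq> {..<t}" and "w \<notin> monom_multiples G"
    and socle: "\<forall>i<t. w + Poly_Mapping.single i 1 \<in> monom_multiples G"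
    using w by (auto simp: socle_monoms_def standard_monoms_def)
  have multiple_iff: "m + w \<in> monom_multiples G \<longleftrightarrow> m \<noteq> 0" if m: "Poly_Mapping.keys m \<subseteq> {..<t}" for m
  proof
    assume "m \<noteq> 0"
    then obtain i where i: "i < t" "0 < Poly_Mapping.lookup m i" using monom_ne_0_iff[OF m] by blast
    show "m + w \<in> monom_multiples G"
    proof (rule monom_multiples_mono)
      show "w + Poly_Mapping.single i 1 \<in> monom_multiples G" using socle i(1) by blast
      show "\<forall>j. Poly_Mapping.lookup (w + Poly_Mapping.single i 1) j \<le> Poly_Mapping.lookup (m + w) j"
        using i(2) by (simp add: lookup_add lookup_single when_def)
    qed
  qed (use \<open>w \<notin> monom_multiples G\<close> in auto)
  have "g * monomial w \<in> ideal_gen t G \<longleftrightarrow> Poly_Mapping.lookup g 0 = 0" if g: "g \<in> polyring t" for g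
  proof -
    have "g * monomial w \<in> polyring t" using polyring_mult[OF g monomial_in_polyring[OF wt]] .
    then have "g * monomial w \<in> ideal_gen t G \<longleftrightarrow> (\<forall>m\<in>Poly_Mapping.keys g. m + w \<in> monom_multiples G)"
      by (auto simp: ideal_gen_monomials[OF G] keys_mult_monomial)
    also have "\<dots> \<longleftrightarrow> (\<forall>m\<in>Poly_Mapping.keys g. m \<noteq> 0)"
      using g multiple_iff by (intro ball_cong refl) (auto simp: polyring_def)
    also have "\<dots> \<longleftrightarrow> Poly_Mapping.lookup g 0 = 0" by (auto simp: in_keys_iff)
    finally show ?thesis .
  qed
  then show ?thesis unfolding colon_def maxid_eq by auto
qed

lemma maxid_in_Ass_if_socle_monom:
  assumes "\<forall>g\<in>G. is_monom t g" and w: "w \<in> socle_monoms t G"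
  shows "maxid t \<in> Ass t (ideal_gen t G)"
proof -
  have "monomial w \<in> polyring t"
    using w by (simp add: socle_monoms_def standard_monoms_def monomial_in_polyring)
  then show ?thesis
    using colon_socle_monom_eq_maxid[OF assms] prime_ideal_maxid unfolding Ass_def by blast
qed

lemma v_number_le: "f \<in> homog t k \<Longrightarrow> P \<in> Ass t I \<Longrightarrow> colon t I f = P \<Longrightarrow> v_number t I \<le> k"
  unfolding v_number_def by (rule Least_le) blast

lemma v_number_attained:
  assumes "f \<in> homog t k" "P \<in> Ass t I" "colon t I f = P"
  obtains f' P' where "f' \<in> homog t (v_number t I)" "P' \<in> Ass t I" "colon t I f' = P'"
  using LeastI[of "\<lambda>k. \<exists>f\<in>homog t k. \<exists>P\<in>Ass t I. colon t I f = P" k] assms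
  unfolding v_number_def by blast

lemma v_number_le_socle_degree:
  assumes "\<forall>g\<in>G. is_monom t g" and w: "w \<in> socle_monoms t G"
  shows "v_number t (ideal_gen t G) \<le> tdeg w"
proof (rule v_number_le)
  show "monomial w \<in> homog t (tdeg w)"
    using w by (simp add: socle_monoms_def standard_monoms_def monomial_in_homog)
qed (use colon_socle_monom_eq_maxid[OF assms] maxid_in_Ass_if_socle_monom[OF assms] in auto)

lemma ex_socle_monom:
  assumes "u \<in> standard_monoms t G" and "\<forall>m\<in>standard_monoms t G. tdeg m < n"
  obtains w where "w \<in> socle_monoms t G"
proof -
  obtain w where w: "w \<in> standard_monoms t G" and max: "\<forall>m\<in>standard_monoms t G. tdeg m \<le> tdeg w"
    using Lattices_Big.ex_has_greatest_nat[of "\<lambda>m. m \<in> standard_monoms t G" u tdeg n] assms by blast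
  have "w + Poly_Mapping.single i 1 \<in> monom_multiples G" if "i < t" for i
  proof (rule ccontr)
    assume "w + Poly_Mapping.single i 1 \<notin> monom_multiples G"
    then have "w + Poly_Mapping.single i 1 \<in> standard_monoms t G"
      using w that by (simp add: standard_monoms_def keys_add_monom)
    then show False using max by (fastforce simp: tdeg_add)
  qed
  with w show ?thesis by (intro that[of w]) (simp add: socle_monoms_def)
qed

subsection \<open>The corner monomial\<close>

definition corner_monom :: "nat \<Rightarrow> (nat \<Rightarrow> nat) \<Rightarrow> monom" where
  "corner_monom t a = Abs_poly_mapping (\<lambda>i. if i < t then a i - 1 else 0)"

lemma lookup_corner_monom: "Poly_Mapping.lookup (corner_monom t a) i = (if i < t then a i - 1 else 0)"
proof -
  have "finite {i. (if i < t then a i - 1 else 0) \<noteq> 0}"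
    by (rule finite_subset[of _ "{..<t}"]) auto
  then show ?thesis by (simp add: corner_monom_def)
qed

lemma keys_corner_monom: "Poly_Mapping.keys (corner_monom t a) \<subseteq> {..<t}"
  by (auto simp: in_keys_iff lookup_corner_monom split: if_splits)

lemma tdeg_corner_monom: "tdeg (corner_monom t a) = (\<Sum>i<t. a i - 1)"
  by (simp add: tdeg_eq_sum_lessThan[OF keys_corner_monom] lookup_corner_monom)

lemma corner_monom_above:
  assumes "Poly_Mapping.keys m \<subseteq> {..<t}" and "\<forall>i<t. Poly_Mapping.lookup m i < a i"
  shows "\<forall>i. Poly_Mapping.lookup m i \<le> Poly_Mapping.lookup (corner_monom t a) i"
  using assms by (auto simp: lookup_corner_monom in_keys_iff)

lemma below_corner_monom_strict:
  assumes "Poly_Mapping.keys m \<subseteq> {..<t}" and "\<forall>i<t. Poly_Mapping.lookup m i < a i"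
    and "m \<noteq> corner_monom t a"
  obtains i where "i < t" "Poly_Mapping.lookup m i < a i - 1"
proof -
  obtain i where "Poly_Mapping.lookup m i \<noteq> Poly_Mapping.lookup (corner_monom t a) i"
    using assms(3) by (meson poly_mapping_eqI)
  moreover have "Poly_Mapping.lookup m i \<le> Poly_Mapping.lookup (corner_monom t a) i"
    using corner_monom_above[OF assms(1,2)] by blast
  ultimately have "i < t" "Poly_Mapping.lookup m i < a i - 1"
    by (auto simp: lookup_corner_monom split: if_splits)
  then show ?thesis by (rule that)
qed

lemma tdeg_below_corner_monom:
  assumes "Poly_Mapping.keys m \<subseteq> {..<t}" and "\<forall>i<t. Poly_Mapping.lookup m i < a i"
    and "m \<noteq> corner_monom t a"
  shows "tdeg m < tdeg (corner_monom t a)"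
proof -
  obtain j where "j < t" "Poly_Mapping.lookup m j < a j - 1"
    using below_corner_monom_strict[OF assms] .
  moreover have "\<forall>i\<in>{..<t}. Poly_Mapping.lookup m i \<le> a i - 1"
    using assms(2) by auto
  ultimately have "(\<Sum>i<t. Poly_Mapping.lookup m i) < (\<Sum>i<t. a i - 1)"
    by (intro sum_strict_mono_ex1) auto
  then show ?thesis by (simp add: tdeg_eq_sum_lessThan[OF assms(1)] tdeg_corner_monom)
qed

subsection \<open>The v-number of a pure power ideal\<close>

lemma standard_monoms_pure_powers:
  "m \<in> standard_monoms t (pure_powers t a :: 'k::field mpoly set) \<longleftrightarrow>
     Poly_Mapping.keys m \<subseteq> {..<t} \<and> (\<forall>i<t. Poly_Mapping.lookup m i < a i)"
  by (auto simp: standard_monoms_def monom_multiples_pure_powers not_le)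

lemma pure_powers_colon_degree_ge:
  fixes t :: nat and a :: "nat \<Rightarrow> nat" and f :: "'k::field mpoly"
  defines "J \<equiv> ideal_gen t (pure_powers t a :: 'k mpoly set)"
  assumes f: "f \<in> homog t k" and P: "P \<in> Ass t J" and colon: "colon t J f = P"
  shows "tdeg (corner_monom t a) \<le> k"
proof (rule ccontr)
  assume small: "\<not> ?thesis"
  have J_eq: "J = {p \<in> polyring t. \<forall>m\<in>Poly_Mapping.keys p. \<exists>i<t. a i \<le> Poly_Mapping.lookup m i}"
    unfolding J_def by (auto simp: ideal_gen_monomials[OF is_monom_pure_powers] monom_multiples_pure_powers)
  have prime: "prime_ideal t P" using P by (simp add: Ass_def)
  then have "P \<noteq> polyring t" by (simp add: prime_ideal_def proper_ideal_def)
  then have "f \<notin> J"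
    using colon colon_eq_polyring_if_mem[OF is_ideal_ideal_gen_monomials[OF is_monom_pure_powers]]
    unfolding J_def by blast
  have fS: "f \<in> polyring t" using f by (simp add: homog_def)
  obtain c where c: "c \<in> Poly_Mapping.keys f" "\<forall>i<t. Poly_Mapping.lookup c i < a i"
    using \<open>f \<notin> J\<close> fS by (auto simp: J_eq not_le)
  have ct: "Poly_Mapping.keys c \<subseteq> {..<t}" using fS c(1) by (auto simp: polyring_def)
  have "c \<noteq> corner_monom t a" using f c(1) small by (auto simp: homog_def)
  then obtain i where i: "i < t" "Poly_Mapping.lookup c i < a i - 1"
    using below_corner_monom_strict[OF ct c(2)] by blast
  have "f * varpow i 1 \<notin> J"
  proof
    assume "f * varpow i 1 \<in> J"
    moreover have "c + Poly_Mapping.single i 1 \<in> Poly_Mapping.keys (f * varpow i 1)"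
      using c(1) by (simp add: varpow_def keys_mult_monomial)
    ultimately obtain j where "j < t" "a j \<le> Poly_Mapping.lookup (c + Poly_Mapping.single i 1) j"
      unfolding J_eq by blast
    then show False using c(2) i by (auto simp: lookup_add lookup_single when_def split: if_splits)
  qed
  then have "varpow i 1 \<notin> P" using colon unfolding colon_def by (auto simp: mult.commute)
  have "\<forall>m\<in>Poly_Mapping.keys (f * varpow i (a i)). a i \<le> Poly_Mapping.lookup m i"
    by (auto simp: varpow_def keys_mult_monomial lookup_add)
  then have "f * varpow i (a i) \<in> J"
    using i(1) polyring_mult[OF fS varpow_in_polyring[OF i(1)]] unfolding J_eq by blast
  then have "varpow i (a i) \<in> P"
    using colon varpow_in_polyring[OF i(1)] unfolding colon_def by (auto simp: mult.commute)
  then show False using prime_ideal_varpow_imp_var[OF prime i(1)] \<open>varpow i 1 \<notin> P\<close> by blast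
qed

lemma v_number_pure_powers:
  assumes a: "\<forall>i<t. 0 < a i"
  shows "v_number t (ideal_gen t (pure_powers t a :: 'k::field mpoly set)) = (\<Sum>i<t. a i - 1)"
proof -
  let ?G = "pure_powers t a :: 'k mpoly set"
  let ?c = "corner_monom t a"
  have "?c + Poly_Mapping.single i 1 \<in> monom_multiples ?G" if "i < t" for i
  proof -
    have "a i \<le> Poly_Mapping.lookup (?c + Poly_Mapping.single i 1) i"
      using a that by (simp add: lookup_add lookup_corner_monom)
    then show ?thesis using that by (auto simp: monom_multiples_pure_powers)
  qed
  then have c: "?c \<in> socle_monoms t ?G"
    using a keys_corner_monom
    by (auto simp: socle_monoms_def standard_monoms_pure_powers lookup_corner_monom)
  have le: "v_number t (ideal_gen t ?G) \<le> tdeg ?c"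
    by (rule v_number_le_socle_degree[OF is_monom_pure_powers c])
  obtain f P where "f \<in> homog t (v_number t (ideal_gen t ?G))" "P \<in> Ass t (ideal_gen t ?G)"
      "colon t (ideal_gen t ?G) f = P"
    by (rule v_number_attained[OF monomial_in_homog[OF keys_corner_monom]
          maxid_in_Ass_if_socle_monom[OF is_monom_pure_powers c]
          colon_socle_monom_eq_maxid[OF is_monom_pure_powers c]])
  then have "tdeg ?c \<le> v_number t (ideal_gen t ?G)"
    by (rule pure_powers_colon_degree_ge)
  with le show ?thesis by (simp add: tdeg_corner_monom)
qed

lemma v_number_lt_if_pure_powers_psubset:
  assumes G: "\<forall>g\<in>G. is_monom t g" and proper: "ideal_gen t G \<noteq> polyring t"
    and pow: "\<forall>i<t. (varpow i (a i) :: 'k::field mpoly) \<in> ideal_gen t G"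
    and ne: "ideal_gen t G \<noteq> ideal_gen t (pure_powers t a)"
  shows "v_number t (ideal_gen t G) < (\<Sum>i<t. a i - 1)"
proof -
  have pow_multiple: "Poly_Mapping.single i (a i) \<in> monom_multiples G" if "i < t" for i
    using pow that by (auto simp: ideal_gen_monomials[OF G] varpow_def)
  have "ideal_gen t (pure_powers t a) \<subseteq> ideal_gen t G"
    using pow by (intro ideal_gen_least is_ideal_ideal_gen_monomials[OF G]) blast
  with ne obtain p where p: "p \<in> ideal_gen t G" "p \<notin> ideal_gen t (pure_powers t a)" by blast
  then obtain c where c: "c \<in> Poly_Mapping.keys p" "c \<in> standard_monoms t (pure_powers t a :: 'k mpoly set)"
    by (auto simp: ideal_gen_monomials[OF G] ideal_gen_monomials[OF is_monom_pure_powers]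
        standard_monoms_def polyring_def)
  have "c \<in> monom_multiples G" using p(1) c(1) by (auto simp: ideal_gen_monomials[OF G])
  then have corner: "corner_monom t a \<in> monom_multiples G"
    using c(2) corner_monom_above by (auto simp: standard_monoms_pure_powers intro: monom_multiples_mono)
  have deg: "tdeg m < tdeg (corner_monom t a)" if m: "m \<in> standard_monoms t G" for m
  proof (rule tdeg_below_corner_monom)
    show "\<forall>i<t. Poly_Mapping.lookup m i < a i"
      using m pow_multiple standard_monom_lookup_less by blast
  qed (use m corner in \<open>auto simp: standard_monoms_def\<close>)
  obtain w where w: "w \<in> socle_monoms t G"
    using ex_socle_monom[OF zero_in_standard_monoms[OF G proper]] deg by blast
  have "v_number t (ideal_gen t G) \<le> tdeg w"
    by (rule v_number_le_socle_degree[OF G w])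
  also have "\<dots> < (\<Sum>i<t. a i - 1)"
    using deg w by (simp add: socle_monoms_def tdeg_corner_monom)
  finally show ?thesis .
qed

theorem corollary4p4:
  fixes t :: nat and I :: "'k::field mpoly set" and a :: "nat \<Rightarrow> nat"
  assumes "monomial_ideal t I"
    and "m_primary t I"
    and "\<forall>i<t. a i > 0"
    and "\<forall>i<t. (varpow i (a i) :: 'k mpoly) \<in> mingens t I"
  shows "I = ideal_gen t {varpow i (a i) | i. i < t}
         \<longleftrightarrow> int (v_number t I) = (\<Sum>i<t. int (a i)) - int t"
proof -
  obtain G where G: "\<forall>g\<in>G. is_monom t g" and I: "I = ideal_gen t G"
    using assms(1) unfolding monomial_ideal_def by blast
  have proper: "I \<noteq> polyring t"
    using assms(2) unfolding m_primary_def primary_ideal_def proper_ideal_def by blast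
  have pow: "\<forall>i<t. (varpow i (a i) :: 'k mpoly) \<in> I"
    using assms(4) by (simp add: mingens_def)
  define N where "N = (\<Sum>i<t. a i - 1)"
  have "int N = (\<Sum>i<t. int (a i) - 1)"
    using assms(3) by (simp add: N_def of_nat_diff Suc_le_eq)
  then have "int N = (\<Sum>i<t. int (a i)) - int t"
    by (simp add: sum_subtractf)
  then have v_iff: "int (v_number t I) = (\<Sum>i<t. int (a i)) - int t \<longleftrightarrow> v_number t I = N"
    by (metis of_nat_eq_iff)
  show ?thesis unfolding v_iff
  proof
    assume "I = ideal_gen t {varpow i (a i) | i. i < t}"
    then show "v_number t I = N" using v_number_pure_powers[OF assms(3)] by (simp add: N_def)
  next
    assume "v_number t I = N"
    then show "I = ideal_gen t {varpow i (a i) | i. i < t}"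
      using v_number_lt_if_pure_powers_psubset[OF G] proper pow unfolding I N_def by fastforce
  qed
qed

end
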